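(* Fix $(\hat\imath,\hat\jmath)\in\mathcal E$ and let $B_1$, $B^n_1$ be the associated matrices (which are invertible). For every probability vector $p\in\mathbb R^I$ with positive entries, $$\vartheta_p=-\frac{\langle e,B_1^{-1}h\rangle}{\langle e,B_1^{-1}p\rangle},\qquad \vartheta^n_p=-\frac{\langle e,(B^n_1)^{-1}h^n\rangle}{\langle e,(B^n_1)^{-1}p\rangle}\quad\text{for every }n.$$
   Context: Network and parameters: $\mathcal I=\{1,\dots,I\}$, $\mathcal J=\{1,\dots,J\}$, edges $\mathcal E\subset\mathcal I\times\mathcal J$ with the bipartite graph $\mathcal G=(\mathcal I\cup\mathcal J,\mathcal E)$ a tree; $i\sim j$ iff $(i,j)\in\mathcal E$, $\mathcal J(i)=\{j:i\sim j\}$, $\mathcal I(j)=\{i:i\sim j\}$; $\mathbb R^{\mathcal G}$ denotes arrays in $\mathbb R^{I\times J}$ vanishing off $\mathcal E$, $\mathbb R^{\mathcal G}_+$ those with nonnegative entries. For each $n\in\mathbb N$: $\lambda^n_i>0$, $\mu^n_{ij}>0$, $N^n_j\in\mathbb N$ with $\lambda^n_i/n\to\lambda_i>0$, $N^n_j/n\to\nu_j>0$, $\mu^n_{ij}\to\mu_{ij}>0$, $\hat\lambda^n_i:=(\lambda^n_i-n\lambda_i)/\sqrt n\to\hat\lambda_i$, $\hat\mu^n_{ij}:=\sqrt n(\mu^n_{ij}-\mu_{ij})\to\hat\mu_{ij}$, $\hat\nu^n_j:=\sqrt n(N^n_j/n-\nu_j)\to\hat\nu_j$. Complete resource pooling: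 the LP "minimize $\max_j\sum_i\xi_{ij}$ over $\xi\in\mathbb R^{\mathcal G}_+$ subject to $\sum_j\mu_{ij}\nu_j\xi_{ij}=\lambda_i$ $\forall i$" has a unique solution $\xi^*$, with $\sum_i\xi^*_{ij}=1$ $\forall j$ and $\xi^*_{ij}>0$ for $i\sim j$; $z^*_{ij}:=\xi^*_{ij}\nu_j$. Let $\theta_j:=\hat\nu_j+\sum_{i\in\mathcal I(j)}(\hat\mu_{ij}/\mu_{ij})z^*_{ij}$ and $\theta^n_j:=\hat\nu^n_j+\sum_{i\in\mathcal I(j)}(\hat\mu^n_{ij}/\mu^n_{ij})z^*_{ij}$. SWSS: for a probability vector $p$ with positive entries, $\vartheta_p$ is the (unique) optimal value of: maximize $\vartheta$ over $(\vartheta,\kappa)\in\mathbb R\times\mathbb R^{\mathcal G}$ subject to $\hat\lambda_i\le\sum_{j\in\mathcal J(i)}\mu_{ij}\kappa_{ij}-\vartheta p_i$ $\forall i$ and $\sum_{i\in\mathcal I(j)}\kappa_{ij}=\theta_j$ $\forall j$; $\vartheta^n_p$ is the optimal value of the same program with $\hat\lambda_i,\mu_{ij},\theta_j$ replaced by $\hat\lambda^n_i,\mu^n_{ij},\theta^n_j$. Drift data: $h_i:=\hat\lambda_i-\sum_{j\in\mathcal J(i)}(\mu_{ij}\xi^*_{ij}\hat\nu_j+\hat\mu_{ij}z^*_{ij})$ and $h^n_i:=n^{-1/2}\big(\lambda^n_i-\sum_{j\in\mathcal J(i)}\mu^n_{ij}\xi^*_{ij}N^n_j\big)$. Let $\mathcal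 D=\{(\alpha,\beta)\in\mathbb R^I\times\mathbb R^J:\sum_i\alpha_i=\sum_j\beta_j\}$ and $\Psi:\mathcal D\to\mathbb R^{\mathcal G}$ the unique linear map with $\sum_j\Psi_{ij}(\alpha,\beta)=\alpha_i$, $\sum_i\Psi_{ij}(\alpha,\beta)=\beta_j$. For $(\hat\imath,\hat\jmath)\in\mathcal E$, $B_1\in\mathbb R^{I\times I}$, $B_2\in\mathbb R^{I\times J}$ are the unique matrices with column $\hat\jmath$ of $B_2$ zero and $\sum_{j\in\mathcal J(i)}\mu_{ij}\Psi_{ij}(\alpha,\beta)=(B_1\alpha+B_2\beta)_i$ for all $i$ and $(\alpha,\beta)\in\mathcal D$; $B^n_1,B^n_2$ are defined the same way with $\mu^n_{ij}$ in place of $\mu_{ij}$. $e$ is the all-ones vector. *)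

theory Defs
  imports "HOL-Analysis.Analysis"
begin

definition badj :: "('i \<times> 'j) set \<Rightarrow> ('i + 'j) \<Rightarrow> ('i + 'j) \<Rightarrow> bool" where
  "badj E u v = (case (u, v) of
      (Inl i, Inr j) \<Rightarrow> (i, j) \<in> E
    | (Inr j, Inl i) \<Rightarrow> (i, j) \<in> E
    | _ \<Rightarrow> False)"

definition bip_connected :: "('i \<times> 'j) set \<Rightarrow> bool" where
  "bip_connected E = (\<forall>u v. (badj E)\<^sup>*\<^sup>* u v)"

definition bip_acyclic :: "('i \<times> 'j) set \<Rightarrow> bool" where
  "bip_acyclic E = (\<not> (\<exists>cs. distinct cs \<and> length cs \<ge> 3 \<and>
      (\<forall>k < length cs. badj E (cs ! k) (cs ! ((k + 1) mod length cs)))))"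

definition bip_tree :: "('i \<times> 'j) set \<Rightarrow> bool" where
  "bip_tree E = (bip_connected E \<and> bip_acyclic E)"

definition in_RG :: "('i \<times> 'j) set \<Rightarrow> ('i \<Rightarrow> 'j \<Rightarrow> real) \<Rightarrow> bool" where
  "in_RG E x = (\<forall>i j. (i, j) \<notin> E \<longrightarrow> x i j = 0)"

definition crp_feasible ::
  "('i::finite \<times> 'j::finite) set \<Rightarrow> ('i \<Rightarrow> 'j \<Rightarrow> real) \<Rightarrow> ('j \<Rightarrow> real) \<Rightarrow> ('i \<Rightarrow> real)
   \<Rightarrow> ('i \<Rightarrow> 'j \<Rightarrow> real) \<Rightarrow> bool" where
  "crp_feasible E mu nu lam xi =
     (in_RG E xi \<and> (\<forall>i j. xi i j \<ge> 0) \<and>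
      (\<forall>i. (\<Sum>j\<in>{j. (i, j) \<in> E}. mu i j * nu j * xi i j) = lam i))"

definition crp_objective :: "('i::finite \<Rightarrow> 'j::finite \<Rightarrow> real) \<Rightarrow> real" where
  "crp_objective xi = Max (range (\<lambda>j. \<Sum>i\<in>UNIV. xi i j))"

definition crp_optimal ::
  "('i::finite \<times> 'j::finite) set \<Rightarrow> ('i \<Rightarrow> 'j \<Rightarrow> real) \<Rightarrow> ('j \<Rightarrow> real) \<Rightarrow> ('i \<Rightarrow> real)
   \<Rightarrow> ('i \<Rightarrow> 'j \<Rightarrow> real) \<Rightarrow> bool" where
  "crp_optimal E mu nu lam xi =
     (crp_feasible E mu nu lam xi \<and>
      (\<forall>xi'. crp_feasible E mu nu lam xi' \<longrightarrow> crp_objective xi \<le> crp_objective xi'))"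

definition crp_unique_solution ::
  "('i::finite \<times> 'j::finite) set \<Rightarrow> ('i \<Rightarrow> 'j \<Rightarrow> real) \<Rightarrow> ('j \<Rightarrow> real) \<Rightarrow> ('i \<Rightarrow> real)
   \<Rightarrow> ('i \<Rightarrow> 'j \<Rightarrow> real) \<Rightarrow> bool" where
  "crp_unique_solution E mu nu lam xi =
     (crp_optimal E mu nu lam xi \<and> (\<forall>xi'. crp_optimal E mu nu lam xi' \<longrightarrow> xi' = xi))"

definition swss_feasible ::
  "('i::finite \<times> 'j::finite) set \<Rightarrow> ('i \<Rightarrow> real) \<Rightarrow> ('i \<Rightarrow> 'j \<Rightarrow> real) \<Rightarrow> ('j \<Rightarrow> real)
   \<Rightarrow> ('i \<Rightarrow> real) \<Rightarrow> real \<Rightarrow> bool" where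
  "swss_feasible E lamh mu theta p v =
     (\<exists>kappa. in_RG E kappa \<and>
        (\<forall>i. lamh i \<le> (\<Sum>j\<in>{j. (i, j) \<in> E}. mu i j * kappa i j) - v * p i) \<and>
        (\<forall>j. (\<Sum>i\<in>{i. (i, j) \<in> E}. kappa i j) = theta j))"

definition swss_opt_value ::
  "('i::finite \<times> 'j::finite) set \<Rightarrow> ('i \<Rightarrow> real) \<Rightarrow> ('i \<Rightarrow> 'j \<Rightarrow> real) \<Rightarrow> ('j \<Rightarrow> real)
   \<Rightarrow> ('i \<Rightarrow> real) \<Rightarrow> real \<Rightarrow> bool" where
  "swss_opt_value E lamh mu theta p v =
     (swss_feasible E lamh mu theta p v \<and>
      (\<forall>w. swss_feasible E lamh mu theta p w \<longrightarrow> w \<le> v))"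

definition Psi :: "('i::finite \<times> 'j::finite) set \<Rightarrow> real^'i \<Rightarrow> real^'j \<Rightarrow> ('i \<Rightarrow> 'j \<Rightarrow> real)" where
  "Psi E a b = (THE x. in_RG E x \<and> (\<forall>i. (\<Sum>j\<in>UNIV. x i j) = a $ i) \<and>
                                   (\<forall>j. (\<Sum>i\<in>UNIV. x i j) = b $ j))"

definition Bmats :: "('i::finite \<times> 'j::finite) set \<Rightarrow> ('i \<Rightarrow> 'j \<Rightarrow> real) \<Rightarrow> 'j
                     \<Rightarrow> (real^'i^'i) \<times> (real^'j^'i)" where
  "Bmats E mu jh = (THE (B1, B2). (\<forall>i. B2 $ i $ jh = 0) \<and>
      (\<forall>a b. sum (\<lambda>i. a $ i) UNIV = sum (\<lambda>j. b $ j) UNIV \<longrightarrow>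
         (\<forall>i. (\<Sum>j\<in>{j. (i, j) \<in> E}. mu i j * Psi E a b i j) = (B1 *v a + B2 *v b) $ i)))"

definition B1mat :: "('i::finite \<times> 'j::finite) set \<Rightarrow> ('i \<Rightarrow> 'j \<Rightarrow> real) \<Rightarrow> 'j \<Rightarrow> real^'i^'i" where
  "B1mat E mu jh = fst (Bmats E mu jh)"

end

theory Submission
  imports Defs
begin

(* An array on the edges of a tree is determined by its row and column margins: the
   support of a nonzero array with vanishing margins is a forest with an edge, hence has
   two leaves, and at a leaf the margin is a single nonzero entry.  Conversely, on a
   connected graph every pair of margins with equal totals is attained, because a vector
   orthogonal to all attainable margins has the form (c, ..., c, -c, ..., -c).  So Psi is
   well defined and linear, and the same leaf argument shows that B1 is injective.
   The row vector y = e^T B1^-1 satisfies mu_ij y_i = 1 + (y B2)_j on every edge and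
   (y B2)_jh = 0, so y > 0 by connectivity.  Summing the row constraints of the SWSS
   program with the weights y eliminates kappa and yields theta <y,p> <= -<y,h> for every
   feasible theta; equality is attained by adding to one kappa with row defect h a flow
   with row margins B1^-1 (h + theta p).  For the limit and for the n-th system,
   kappa_ij = xi*_ij nuh_j + (muh_ij / mu_ij) z*_ij is such a kappa, with row defect h
   and h^n respectively. *)

definition rel_path :: "('a \<Rightarrow> 'a \<Rightarrow> bool) \<Rightarrow> 'a list \<Rightarrow> bool" where
  "rel_path R cs \<longleftrightarrow>
     distinct cs \<and> 2 \<le> length cs \<and> (\<forall>k. Suc k < length cs \<longrightarrow> R (cs ! k) (cs ! Suc k))"

definition cycle_free :: "('a \<Rightarrow> 'a \<Rightarrow> bool) \<Rightarrow> bool" where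
  "cycle_free R \<longleftrightarrow> \<not> (\<exists>cs. distinct cs \<and> length cs \<ge> 3 \<and>
      (\<forall>k < length cs. R (cs ! k) (cs ! ((k + 1) mod length cs))))"

lemma cycle_free_mono: "cycle_free R \<Longrightarrow> (\<And>u v. R' u v \<Longrightarrow> R u v) \<Longrightarrow> cycle_free R'"
  unfolding cycle_free_def by blast

lemma rel_path_rev:
  assumes sym: "\<And>u v. R u v \<Longrightarrow> R v u" and p: "rel_path R cs"
  shows "rel_path R (rev cs)"
  unfolding rel_path_def
proof (intro conjI allI impI)
  show "distinct (rev cs)" "2 \<le> length (rev cs)" using p by (simp_all add: rel_path_def)
  fix k assume k: "Suc k < length (rev cs)"
  then have "R (cs ! (length cs - 2 - k)) (cs ! Suc (length cs - 2 - k))"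
    using p by (simp add: rel_path_def)
  moreover have "Suc (length cs - 2 - k) = length cs - 1 - k" using k by simp
  ultimately show "R (rev cs ! k) (rev cs ! Suc k)"
    using k sym by (simp add: rev_nth Suc_diff_Suc numeral_2_eq_2)
qed

lemma rel_path_snoc:
  assumes p: "rel_path R cs" and w: "w \<notin> set cs" "R (last cs) w"
  shows "rel_path R (cs @ [w])"
  unfolding rel_path_def
proof (intro conjI allI impI)
  show "distinct (cs @ [w])" "2 \<le> length (cs @ [w])" using p w by (auto simp: rel_path_def)
  fix k assume k: "Suc k < length (cs @ [w])"
  show "R ((cs @ [w]) ! k) ((cs @ [w]) ! Suc k)"
  proof (cases "Suc k < length cs")
    case True then show ?thesis using p by (simp add: rel_path_def nth_append)
  next
    case False
    then have "k = length cs - 1" "Suc k = length cs" "cs \<noteq> []" using k p by (auto simp: rel_path_def)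
    then show ?thesis using w by (simp add: nth_append last_conv_nth)
  qed
qed

text \<open>An edge from the end of a path back to a vertex other than its predecessor closes
  the cycle formed by the tail of the path starting at that vertex.\<close>

lemma cycle_free_no_back_edge:
  assumes acyc: "cycle_free R" and p: "rel_path R cs" and k: "k + 2 < length cs"
  shows "\<not> R (last cs) (cs ! k)"
proof
  assume closing: "R (last cs) (cs ! k)"
  define cy where "cy = drop k cs"
  have len_cy: "length cy = length cs - k" by (simp add: cy_def)
  have adj: "\<And>k. Suc k < length cs \<Longrightarrow> R (cs ! k) (cs ! Suc k)" using p by (simp add: rel_path_def)
  have "R (cy ! t) (cy ! ((t + 1) mod length cy))" if t: "t < length cy" for t
  proof (cases "t + 1 < length cy")
    case True
    then show ?thesis using adj[of "k + t"] len_cy k by (simp add: cy_def)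
  next
    case False
    then have "t + 1 = length cy" "k + t = length cs - 1" "cs \<noteq> []" using t len_cy k by auto
    then show ?thesis using closing k by (simp add: cy_def last_conv_nth)
  qed
  moreover have "distinct cy" "length cy \<ge> 3" using p len_cy k by (simp_all add: rel_path_def cy_def)
  ultimately show False using acyc unfolding cycle_free_def by blast
qed

lemma longest_path_last_neighbour:
  assumes irrefl: "\<And>u. \<not> R u u" and acyc: "cycle_free R"
    and p: "rel_path R cs" and longest: "\<And>cs'. rel_path R cs' \<Longrightarrow> length cs' \<le> length cs"
    and w: "R (last cs) w"
  shows "w = cs ! (length cs - 2)"
proof (cases "w \<in> set cs")
  case False
  with longest[OF rel_path_snoc[OF p False w]] show ?thesis by simp
next
  case True
  then obtain k where k: "k < length cs" "w = cs ! k" by (auto simp: in_set_conv_nth)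
  have "cs \<noteq> []" "2 \<le> length cs" using p by (auto simp: rel_path_def)
  then have "k \<noteq> length cs - 1" using irrefl w k by (auto simp: last_conv_nth)
  moreover have "\<not> k + 2 < length cs" using cycle_free_no_back_edge[OF acyc p] w k by blast
  ultimately have "k = length cs - 2" using k(1) by arith
  with k show ?thesis by simp
qed

lemma cycle_free_two_leaves:
  fixes R :: "'a::finite \<Rightarrow> 'a \<Rightarrow> bool"
  assumes sym: "\<And>u v. R u v \<Longrightarrow> R v u" and irrefl: "\<And>u. \<not> R u u" and acyc: "cycle_free R"
    and edge: "R a b"
  obtains u v where "u \<noteq> v" "\<exists>!w. R u w" "\<exists>!w. R v w"
proof -
  have fin: "finite {cs. rel_path R cs}"
    by (rule finite_subset[OF _ finite_subset_distinct[of "UNIV :: 'a set"]])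
      (auto simp: rel_path_def)
  have "rel_path R [a, b]" using edge irrefl by (auto simp: rel_path_def less_Suc_eq)
  then have "Max (length ` {cs. rel_path R cs}) \<in> length ` {cs. rel_path R cs}"
    using fin by (intro Max_in) auto
  then obtain cs where p: "rel_path R cs" and max: "length cs = Max (length ` {cs. rel_path R cs})"
    by auto
  have longest: "length cs' \<le> length cs" if "rel_path R cs'" for cs'
    unfolding max using fin that by (auto intro: Max_ge)
  have n2: "2 \<le> length cs" and dist: "distinct cs"
    and adj: "\<And>k. Suc k < length cs \<Longrightarrow> R (cs ! k) (cs ! Suc k)"
    using p by (auto simp: rel_path_def)
  have "Suc (length cs - 2) = length cs - 1" "cs \<noteq> []" using n2 by auto
  then have prev: "R (last cs) (cs ! (length cs - 2))"
    using sym[OF adj[of "length cs - 2"]] by (simp add: last_conv_nth)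
  have "\<exists>!w. R (last cs) w"
    using prev longest_path_last_neighbour[OF irrefl acyc p longest] by blast
  moreover have "\<exists>!w. R (last (rev cs)) w"
  proof -
    have p': "rel_path R (rev cs)" by (rule rel_path_rev[OF sym p])
    have "R (last (rev cs)) (rev cs ! (length (rev cs) - 2))"
      using adj[of 0] n2 \<open>cs \<noteq> []\<close> by (simp add: last_rev rev_nth hd_conv_nth)
    moreover have "length cs' \<le> length (rev cs)" if "rel_path R cs'" for cs'
      using longest[OF that] by simp
    ultimately show ?thesis
      using longest_path_last_neighbour[OF irrefl acyc p'] by blast
  qed
  moreover have "last cs \<noteq> last (rev cs)"
    using n2 dist by (cases cs) (auto simp: last_rev)
  ultimately show ?thesis using that by blast
qed

section \<open>Arrays on a forest are determined by their margins\<close>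

lemma badj_sym: "badj E u v \<Longrightarrow> badj E v u"
  by (auto simp: badj_def split: sum.splits)

lemma badj_irrefl: "\<not> badj E u u"
  by (auto simp: badj_def split: sum.splits)

lemma bip_acyclic_iff_cycle_free: "bip_acyclic E \<longleftrightarrow> cycle_free (badj E)"
  by (simp add: bip_acyclic_def cycle_free_def)

lemma bip_connected_induct:
  assumes "bip_connected E" "P u" "\<And>u v. badj E u v \<Longrightarrow> P u \<Longrightarrow> P v"
  shows "P v"
proof -
  have "(badj E)\<^sup>*\<^sup>* u v" using assms(1) by (simp add: bip_connected_def)
  then show ?thesis by (induction rule: rtranclp_induct) (use assms in blast)+
qed

definition support_adj :: "('i \<times> 'j) set \<Rightarrow> ('i \<Rightarrow> 'j \<Rightarrow> real) \<Rightarrow> 'i + 'j \<Rightarrow> 'i + 'j \<Rightarrow> bool" where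
  "support_adj E x = badj {(i, j) \<in> E. x i j \<noteq> 0}"

lemma support_adj_leaf_row:
  assumes x: "in_RG E x" and leaf: "\<exists>!w. support_adj E x (Inl i) w"
  obtains j where "(i, j) \<in> E" "x i j \<noteq> 0" "\<And>j'. j' \<noteq> j \<Longrightarrow> x i j' = 0"
proof -
  from leaf obtain w where w: "support_adj E x (Inl i) w"
    and uniq: "\<And>w'. support_adj E x (Inl i) w' \<Longrightarrow> w' = w" by blast
  then obtain j where "w = Inr j" by (cases w) (auto simp: support_adj_def badj_def)
  with w have "(i, j) \<in> E" "x i j \<noteq> 0" by (simp_all add: support_adj_def badj_def)
  moreover have "x i j' = 0" if "j' \<noteq> j" for j'
  proof (rule ccontr)
    assume "x i j' \<noteq> 0"
    with x have "support_adj E x (Inl i) (Inr j')"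
      by (auto simp: support_adj_def badj_def in_RG_def)
    with uniq \<open>w = Inr j\<close> that show False by auto
  qed
  ultimately show ?thesis using that by blast
qed

lemma support_adj_leaf_col:
  assumes x: "in_RG E x" and leaf: "\<exists>!w. support_adj E x (Inr j) w"
  obtains i where "(i, j) \<in> E" "x i j \<noteq> 0" "\<And>i'. i' \<noteq> i \<Longrightarrow> x i' j = 0"
proof -
  from leaf obtain w where w: "support_adj E x (Inr j) w"
    and uniq: "\<And>w'. support_adj E x (Inr j) w' \<Longrightarrow> w' = w" by blast
  then obtain i where "w = Inl i" by (cases w) (auto simp: support_adj_def badj_def)
  with w have "(i, j) \<in> E" "x i j \<noteq> 0" by (simp_all add: support_adj_def badj_def)
  moreover have "x i' j = 0" if "i' \<noteq> i" for i'
  proof (rule ccontr)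
    assume "x i' j \<noteq> 0"
    with x have "support_adj E x (Inr j) (Inl i')"
      by (auto simp: support_adj_def badj_def in_RG_def)
    with uniq \<open>w = Inl i\<close> that show False by auto
  qed
  ultimately show ?thesis using that by blast
qed

lemma sum_UNIV_single:
  fixes f :: "'a::finite \<Rightarrow> 'b::comm_monoid_add"
  assumes "\<And>a'. a' \<noteq> a \<Longrightarrow> f a' = 0"
  shows "(\<Sum>a'\<in>UNIV. f a') = f a"
  using assms by (subst sum.mono_neutral_right[of UNIV "{a}"]) auto

lemma support_adj_leaf_avoiding:
  fixes x :: "'i::finite \<Rightarrow> 'j::finite \<Rightarrow> real"
  assumes acyc: "bip_acyclic E" and x: "in_RG E x" and nz: "x i0 j0 \<noteq> 0"
  obtains u where "u \<noteq> z" "\<exists>!w. support_adj E x u w"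
proof -
  have "(i0, j0) \<in> E" using x nz by (auto simp: in_RG_def)
  with nz have edge: "support_adj E x (Inl i0) (Inr j0)" by (simp add: support_adj_def badj_def)
  have acyc': "cycle_free (support_adj E x)"
    using acyc unfolding bip_acyclic_iff_cycle_free support_adj_def
    by (rule cycle_free_mono) (auto simp: badj_def split: sum.splits)
  have sym: "support_adj E x v w" if "support_adj E x w v" for v w
    using that badj_sym unfolding support_adj_def by blast
  have irrefl: "\<not> support_adj E x v v" for v
    using badj_irrefl unfolding support_adj_def by blast
  obtain u v where leaves: "u \<noteq> v" "\<exists>!w. support_adj E x u w" "\<exists>!w. support_adj E x v w"
    by (rule cycle_free_two_leaves[OF sym irrefl acyc' edge])
  show ?thesis
  proof (cases "u = z")
    case True then show ?thesis using that[of v] leaves by simp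
  next
    case False then show ?thesis using that[of u] leaves by simp
  qed
qed

text \<open>At a leaf of the support, away from column \<open>jh\<close>, the vanishing sum has exactly one
  nonzero term.\<close>

lemma acyclic_array_eq_0:
  fixes x :: "'i::finite \<Rightarrow> 'j::finite \<Rightarrow> real"
  assumes acyc: "bip_acyclic E" and x: "in_RG E x"
    and c: "\<And>i j. (i, j) \<in> E \<Longrightarrow> c i j \<noteq> 0"
    and rows: "\<And>i. (\<Sum>j\<in>UNIV. c i j * x i j) = 0"
    and cols: "\<And>j. j \<noteq> jh \<Longrightarrow> (\<Sum>i\<in>UNIV. x i j) = 0"
  shows "x i0 j0 = 0"
proof (rule ccontr)
  assume "x i0 j0 \<noteq> 0"
  then obtain u where u: "u \<noteq> Inr jh" "\<exists>!w. support_adj E x u w"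
    by (rule support_adj_leaf_avoiding[OF acyc x])
  show False
  proof (cases u)
    case (Inl i)
    with u have leaf: "\<exists>!w. support_adj E x (Inl i) w" by simp
    obtain j where j: "(i, j) \<in> E" "x i j \<noteq> 0" and zero: "\<And>j'. j' \<noteq> j \<Longrightarrow> x i j' = 0"
      using support_adj_leaf_row[OF x leaf] by blast
    have "(\<Sum>j'\<in>UNIV. c i j' * x i j') = c i j * x i j"
      by (rule sum_UNIV_single) (simp add: zero)
    with rows[of i] c[OF j(1)] j(2) show False by simp
  next
    case (Inr j)
    with u have leaf: "\<exists>!w. support_adj E x (Inr j) w" by simp
    obtain i where i: "x i j \<noteq> 0" and zero: "\<And>i'. i' \<noteq> i \<Longrightarrow> x i' j = 0"
      using support_adj_leaf_col[OF x leaf] by blast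
    have "(\<Sum>i'\<in>UNIV. x i' j) = x i j"
      by (rule sum_UNIV_single) (simp add: zero)
    with cols[of j] Inr u i show False by simp
  qed
qed

definition has_margins :: "('i::finite \<times> 'j::finite) set \<Rightarrow> real^'i \<Rightarrow> real^'j \<Rightarrow> ('i \<Rightarrow> 'j \<Rightarrow> real) \<Rightarrow> bool" where
  "has_margins E a b x \<longleftrightarrow> in_RG E x \<and> (\<forall>i. (\<Sum>j\<in>UNIV. x i j) = a $ i) \<and> (\<forall>j. (\<Sum>i\<in>UNIV. x i j) = b $ j)"

lemma in_RG_sum_row:
  fixes x :: "'i \<Rightarrow> 'j::finite \<Rightarrow> real"
  shows "in_RG E x \<Longrightarrow> (\<Sum>j\<in>{j. (i, j) \<in> E}. f j * x i j) = (\<Sum>j\<in>UNIV. f j * x i j)"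
  by (rule sum.mono_neutral_left) (auto simp: in_RG_def)

lemma in_RG_sum_col:
  fixes x :: "'i::finite \<Rightarrow> 'j \<Rightarrow> real"
  shows "in_RG E x \<Longrightarrow> (\<Sum>i\<in>{i. (i, j) \<in> E}. x i j) = (\<Sum>i\<in>UNIV. x i j)"
  by (rule sum.mono_neutral_left) (auto simp: in_RG_def)

lemma has_margins_sum_eq:
  assumes "has_margins E a b x"
  shows "(\<Sum>i\<in>UNIV. a $ i) = (\<Sum>j\<in>UNIV. b $ j)"
  using assms sum.swap[of x UNIV UNIV] by (simp add: has_margins_def)

lemma has_margins_unique:
  assumes acyc: "bip_acyclic E" and "has_margins E a b x" "has_margins E a b y"
  shows "x = y"
proof -
  have "x i j - y i j = 0" for i j
    by (rule acyclic_array_eq_0[OF acyc, where c = "\<lambda>i j. 1" and jh = undefined])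
      (use assms in \<open>auto simp: has_margins_def in_RG_def sum_subtractf\<close>)
  then show ?thesis by auto
qed

lemma has_margins_sum:
  assumes "finite K" "\<And>k. k \<in> K \<Longrightarrow> has_margins E (a k) (b k) (x k)"
  shows "has_margins E (\<Sum>k\<in>K. c k *\<^sub>R a k) (\<Sum>k\<in>K. c k *\<^sub>R b k) (\<lambda>i j. \<Sum>k\<in>K. c k * x k i j)"
  using assms
  by (auto simp: has_margins_def in_RG_def sum.swap[of _ K UNIV] sum_distrib_left[symmetric]
      intro!: sum.neutral)

section \<open>On a connected graph every balanced pair of margins is attained\<close>

lemma sum_UNIV_Plus:
  "(\<Sum>u\<in>UNIV. f u) = (\<Sum>i\<in>UNIV. f (Inl i)) + (\<Sum>j\<in>UNIV. f (Inr j))"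
  for f :: "'a::finite + 'b::finite \<Rightarrow> 'c::comm_monoid_add"
  by (subst UNIV_Plus_UNIV[symmetric], subst sum.Plus) (simp_all add: comp_def)

definition join_vec :: "real^'i::finite \<Rightarrow> real^'j::finite \<Rightarrow> real^('i + 'j)" where
  "join_vec a b = (\<chi> u. case u of Inl i \<Rightarrow> a $ i | Inr j \<Rightarrow> b $ j)"

definition margins :: "('i::finite \<Rightarrow> 'j::finite \<Rightarrow> real) \<Rightarrow> real^('i + 'j)" where
  "margins x = join_vec (\<chi> i. \<Sum>j\<in>UNIV. x i j) (\<chi> j. \<Sum>i\<in>UNIV. x i j)"

lemma has_margins_iff: "has_margins E a b x \<longleftrightarrow> in_RG E x \<and> margins x = join_vec a b"
  by (auto simp: has_margins_def margins_def join_vec_def vec_eq_iff split: sum.splits)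

lemma subspace_margins_image: "subspace (margins ` {x. in_RG E x})"
  unfolding subspace_def
proof (intro conjI ballI allI)
  show "0 \<in> margins ` {x. in_RG E x}"
    by (rule image_eqI[of _ _ "\<lambda>i j. 0"])
      (auto simp: margins_def join_vec_def in_RG_def vec_eq_iff split: sum.splits)
next
  fix v w assume "v \<in> margins ` {x. in_RG E x}" "w \<in> margins ` {x. in_RG E x}"
  then obtain x y where "in_RG E x" "in_RG E y" "v = margins x" "w = margins y" by auto
  then show "v + w \<in> margins ` {x. in_RG E x}"
    by (intro image_eqI[of _ _ "\<lambda>i j. x i j + y i j"])
      (auto simp: margins_def join_vec_def in_RG_def vec_eq_iff sum.distrib split: sum.splits)
next
  fix c :: real and v assume "v \<in> margins ` {x. in_RG E x}"
  then obtain x where "in_RG E x" "v = margins x" by auto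
  then show "c *\<^sub>R v \<in> margins ` {x. in_RG E x}"
    by (intro image_eqI[of _ _ "\<lambda>i j. c * x i j"])
      (auto simp: margins_def join_vec_def in_RG_def vec_eq_iff sum_distrib_left split: sum.splits)
qed

definition unit_array :: "'i \<Rightarrow> 'j \<Rightarrow> 'i \<Rightarrow> 'j \<Rightarrow> real" where
  "unit_array i j = (\<lambda>i' j'. if i' = i \<and> j' = j then 1 else 0)"

lemma has_margins_unit_array:
  "(i, j) \<in> E \<Longrightarrow> has_margins E (axis i 1) (axis j 1) (unit_array i j)"
  by (auto simp: has_margins_def unit_array_def in_RG_def axis_def)

lemma orthogonal_margins_image:
  assumes conn: "bip_connected E"
    and orth: "\<And>x. in_RG E x \<Longrightarrow> t \<bullet> margins x = 0"
  obtains c where "\<And>i. t $ Inl i = c" "\<And>j. t $ Inr j = - c"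
proof -
  have edge: "t $ Inl i = - t $ Inr j" if "(i, j) \<in> E" for i j
  proof -
    have "in_RG E (unit_array i j)" "margins (unit_array i j) = join_vec (axis i 1) (axis j 1)"
      using has_margins_unit_array[OF that] by (simp_all add: has_margins_iff)
    moreover have "t \<bullet> join_vec (axis i 1) (axis j 1) = t $ Inl i + t $ Inr j"
      by (simp add: inner_vec_def sum_UNIV_Plus join_vec_def axis_def if_distrib cong: if_cong)
    ultimately show ?thesis using orth by (metis add_eq_0_iff2)
  qed
  define f where "f u = (case u of Inl i \<Rightarrow> t $ Inl i | Inr j \<Rightarrow> - t $ Inr j)" for u
  have "f v = f u" for u v
  proof (rule bip_connected_induct[OF conn, of "\<lambda>v. f v = f u" u])
    fix v w assume "badj E v w" "f v = f u"
    moreover have "f w = f v"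
      using \<open>badj E v w\<close> edge by (cases v; cases w) (auto simp: badj_def f_def)
    ultimately show "f w = f u" by simp
  qed simp
  then show ?thesis
    using that[of "f (Inl undefined)"] by (metis f_def minus_minus sum.simps)
qed

lemma has_margins_exists:
  fixes a :: "real^'i::finite" and b :: "real^'j::finite"
  assumes conn: "bip_connected E" and sums: "(\<Sum>i\<in>UNIV. a $ i) = (\<Sum>j\<in>UNIV. b $ j)"
  obtains x where "has_margins E a b x"
proof -
  let ?T = "margins ` {x. in_RG E x}"
  obtain s t where s: "s \<in> span ?T" and orth: "\<And>w. w \<in> span ?T \<Longrightarrow> orthogonal t w"
    and st: "join_vec a b = s + t"
    using orthogonal_subspace_decomp_exists by blast
  have "span ?T = ?T" using subspace_margins_image by (simp only: span_eq_iff)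
  with s obtain x where x: "in_RG E x" and sx: "s = margins x" by auto
  obtain c where tl: "\<And>i. t $ Inl i = c" and tr: "\<And>j. t $ Inr j = - c"
    using orthogonal_margins_image[OF conn] orth by (metis orthogonal_def span_base image_eqI mem_Collect_eq)
  have "(\<Sum>i\<in>UNIV. s $ Inl i) = (\<Sum>j\<in>UNIV. s $ Inr j)"
    using sx sum.swap[of x UNIV UNIV] by (simp add: margins_def join_vec_def)
  moreover have "(\<Sum>i\<in>UNIV. join_vec a b $ Inl i) = (\<Sum>j\<in>UNIV. join_vec a b $ Inr j)"
    using sums by (simp add: join_vec_def)
  ultimately have "(\<Sum>i\<in>UNIV. t $ Inl i) = (\<Sum>j\<in>UNIV. t $ Inr j)"
    unfolding st by (simp add: sum.distrib)
  then have "(real CARD('i) + real CARD('j)) * c = 0"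
    by (simp add: tl tr algebra_simps)
  moreover have "0 < real CARD('i) + real CARD('j)" by (simp add: add_pos_pos)
  ultimately have "c = 0" by simp
  then have "t $ u = 0" for u using tl tr by (cases u) auto
  then have "t = 0" by (simp add: vec_eq_iff)
  then show ?thesis using that[of x] x sx st by (simp add: has_margins_iff)
qed

lemma Psi_eq_The: "Psi E a b = (THE x. has_margins E a b x)"
  by (simp add: Psi_def has_margins_def)

lemma Psi_eqI: "bip_tree E \<Longrightarrow> has_margins E a b x \<Longrightarrow> Psi E a b = x"
  unfolding Psi_eq_The bip_tree_def by (blast intro: the_equality has_margins_unique)

lemma Psi_has_margins:
  assumes "bip_tree E" "(\<Sum>i\<in>UNIV. a $ i) = (\<Sum>j\<in>UNIV. b $ j)"
  shows "has_margins E a b (Psi E a b)"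
proof -
  obtain x where "has_margins E a b x"
    using has_margins_exists assms by (metis bip_tree_def)
  with assms(1) show ?thesis by (simp add: Psi_eqI)
qed

lemma sum_axis: "(\<Sum>i\<in>UNIV. axis k c $ i) = (c::'a::comm_monoid_add)"
  by (simp add: axis_def)

text \<open>The pairs \<open>(e\<^sub>k, e\<^sub>j\<^sub>h)\<close> and \<open>(0, e\<^sub>j - e\<^sub>j\<^sub>h)\<close> span the domain of \<open>\<Psi>\<close>; the second one
  vanishes for \<open>j = jh\<close>, which is what makes column \<open>jh\<close> of \<open>B\<^sub>2\<close> zero.\<close>

definition basis_margins :: "'j \<Rightarrow> 'i::finite + 'j \<Rightarrow> (real^'i) \<times> (real^'j::finite)" where
  "basis_margins jh u = (case u of Inl k \<Rightarrow> (axis k 1, axis jh 1) | Inr j \<Rightarrow> (0, axis j 1 - axis jh 1))"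

definition basis_flow :: "('i::finite \<times> 'j::finite) set \<Rightarrow> 'j \<Rightarrow> 'i + 'j \<Rightarrow> 'i \<Rightarrow> 'j \<Rightarrow> real" where
  "basis_flow E jh u = case_prod (Psi E) (basis_margins jh u)"

lemma basis_margins_expansion:
  fixes a :: "real^'i::finite" and b :: "real^'j::finite"
  assumes sums: "(\<Sum>i\<in>UNIV. a $ i) = (\<Sum>j\<in>UNIV. b $ j)"
  shows "(\<Sum>u\<in>UNIV. join_vec a b $ u *\<^sub>R fst (basis_margins jh u)) = a"
    and "(\<Sum>u\<in>UNIV. join_vec a b $ u *\<^sub>R snd (basis_margins jh u)) = b"
proof -
  show "(\<Sum>u\<in>UNIV. join_vec a b $ u *\<^sub>R fst (basis_margins jh u)) = a"
    using basis_expansion[of a]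
    by (simp add: sum_UNIV_Plus join_vec_def basis_margins_def scalar_mult_eq_scaleR)
  have "(\<Sum>u\<in>UNIV. join_vec a b $ u *\<^sub>R snd (basis_margins jh u))
      = (\<Sum>i\<in>UNIV. a $ i *\<^sub>R axis jh 1) + (\<Sum>j\<in>UNIV. b $ j *\<^sub>R (axis j 1 - axis jh 1))"
    by (simp add: sum_UNIV_Plus join_vec_def basis_margins_def)
  also have "\<dots> = (\<Sum>i\<in>UNIV. a $ i) *\<^sub>R axis jh 1 + (\<Sum>j\<in>UNIV. b $ j *\<^sub>R axis j 1)
      - (\<Sum>j\<in>UNIV. b $ j) *\<^sub>R axis jh 1"
    by (simp add: scaleR_diff_right sum_subtractf scaleR_sum_left)
  also have "\<dots> = b"
    using sums basis_expansion[of b] by (simp add: scalar_mult_eq_scaleR)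
  finally show "(\<Sum>u\<in>UNIV. join_vec a b $ u *\<^sub>R snd (basis_margins jh u)) = b" .
qed

lemma Psi_expansion:
  assumes tree: "bip_tree E" and sums: "(\<Sum>i\<in>UNIV. a $ i) = (\<Sum>j\<in>UNIV. b $ j)"
  shows "Psi E a b = (\<lambda>i j. \<Sum>u\<in>UNIV. join_vec a b $ u * basis_flow E jh u i j)"
proof (rule Psi_eqI[OF tree])
  have basis: "has_margins E (fst (basis_margins jh u)) (snd (basis_margins jh u)) (basis_flow E jh u)"
    for u
    unfolding basis_flow_def
    by (cases u) (auto simp: basis_margins_def intro!: Psi_has_margins[OF tree] simp: sum_subtractf sum_axis)
  have "has_margins E (\<Sum>u\<in>UNIV. join_vec a b $ u *\<^sub>R fst (basis_margins jh u))
      (\<Sum>u\<in>UNIV. join_vec a b $ u *\<^sub>R snd (basis_margins jh u))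
      (\<lambda>i j. \<Sum>u\<in>UNIV. join_vec a b $ u * basis_flow E jh u i j)"
    by (rule has_margins_sum) (simp_all add: basis)
  then show "has_margins E a b (\<lambda>i j. \<Sum>u\<in>UNIV. join_vec a b $ u * basis_flow E jh u i j)"
    by (simp only: basis_margins_expansion[OF sums])
qed

definition tree_B1 :: "('i::finite \<times> 'j::finite) set \<Rightarrow> ('i \<Rightarrow> 'j \<Rightarrow> real) \<Rightarrow> 'j \<Rightarrow> real^'i^'i" where
  "tree_B1 E mu jh = (\<chi> i k. \<Sum>j\<in>{j. (i, j) \<in> E}. mu i j * basis_flow E jh (Inl k) i j)"

definition tree_B2 :: "('i::finite \<times> 'j::finite) set \<Rightarrow> ('i \<Rightarrow> 'j \<Rightarrow> real) \<Rightarrow> 'j \<Rightarrow> real^'j^'i" where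
  "tree_B2 E mu jh = (\<chi> i j'. \<Sum>j\<in>{j. (i, j) \<in> E}. mu i j * basis_flow E jh (Inr j') i j)"

lemma weighted_row_sum_Psi:
  assumes tree: "bip_tree E" and sums: "(\<Sum>i\<in>UNIV. a $ i) = (\<Sum>j\<in>UNIV. b $ j)"
  shows "(\<Sum>j\<in>{j. (i, j) \<in> E}. mu i j * Psi E a b i j) = (tree_B1 E mu jh *v a + tree_B2 E mu jh *v b) $ i"
proof -
  have "(\<Sum>j\<in>{j. (i, j) \<in> E}. mu i j * Psi E a b i j)
      = (\<Sum>u\<in>UNIV. join_vec a b $ u * (\<Sum>j\<in>{j. (i, j) \<in> E}. mu i j * basis_flow E jh u i j))"
    by (simp add: Psi_expansion[OF tree sums, of jh] sum_distrib_left sum.swap[of _ "{j. (i, j) \<in> E}"]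
        mult.left_commute)
  then show ?thesis
    by (simp add: sum_UNIV_Plus join_vec_def matrix_vector_mult_def tree_B1_def tree_B2_def mult.commute)
qed

lemma tree_B2_column_jh: "bip_tree E \<Longrightarrow> tree_B2 E mu jh $ i $ jh = 0"
  using Psi_eqI[of E 0 0 "\<lambda>i j. 0"]
  by (simp add: tree_B2_def basis_flow_def basis_margins_def has_margins_def in_RG_def)

lemma matrix_pair_eqI:
  fixes B1 B1' :: "real^'i::finite^'m::finite" and B2 B2' :: "real^'j::finite^'m"
  assumes agree: "\<And>a b. (\<Sum>i\<in>UNIV. a $ i) = (\<Sum>j\<in>UNIV. b $ j) \<Longrightarrow> B1 *v a + B2 *v b = B1' *v a + B2' *v b"
    and zero: "column jh B2 = 0" "column jh B2' = 0"
  shows "B1 = B1'" "B2 = B2'"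
proof -
  have "column k B1 = column k B1'" for k
    using agree[of "axis k 1" "axis jh 1"] zero by (simp add: sum_axis matrix_vector_mult_basis)
  then show "B1 = B1'" by (simp add: column_def vec_eq_iff)
  have "column j B2 = column j B2'" for j
    using agree[of 0 "axis j 1 - axis jh 1"] zero
    by (simp add: sum_axis sum_subtractf matrix_vector_mult_basis matrix_vector_mult_diff_distrib)
  then show "B2 = B2'" by (simp add: column_def vec_eq_iff)
qed

lemma Bmats_eq:
  assumes tree: "bip_tree E"
  shows "Bmats E mu jh = (tree_B1 E mu jh, tree_B2 E mu jh)"
  unfolding Bmats_def
proof (rule the_equality, goal_cases)
  case 1
  show ?case using tree_B2_column_jh[OF tree] weighted_row_sum_Psi[OF tree] by simp
next
  case (2 p)
  obtain B1 B2 where p: "p = (B1, B2)" by fastforce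
  have zero: "column jh B2 = 0" "column jh (tree_B2 E mu jh) = 0"
    using 2 tree_B2_column_jh[OF tree] by (auto simp: p column_def vec_eq_iff)
  have "B1 *v a + B2 *v b = tree_B1 E mu jh *v a + tree_B2 E mu jh *v b"
    if "(\<Sum>i\<in>UNIV. a $ i) = (\<Sum>j\<in>UNIV. b $ j)" for a b
    using 2 weighted_row_sum_Psi[OF tree that] that by (simp add: p vec_eq_iff)
  with zero show ?case using matrix_pair_eqI by (metis p)
qed

lemma weighted_row_sum_B:
  assumes tree: "bip_tree E" and x: "has_margins E a b x"
  shows "(\<Sum>j\<in>{j. (i, j) \<in> E}. mu i j * x i j) = (B1mat E mu jh *v a + tree_B2 E mu jh *v b) $ i"
  using weighted_row_sum_Psi[OF tree has_margins_sum_eq[OF x]] Psi_eqI[OF tree x]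
  by (simp add: B1mat_def Bmats_eq[OF tree])

lemma matrix_vector_mult_axis: "(A *v axis k c) $ i = A $ i $ k * c"
  for A :: "'a::comm_semiring_1^'n::finite^'m"
  by (simp add: matrix_vector_mult_def axis_def if_distrib cong: if_cong)

text \<open>If \<open>B\<^sub>1 d = 0\<close>, the flow with margins \<open>(d, (\<Sum>d) e\<^sub>j\<^sub>h)\<close> has vanishing \<open>\<mu>\<close>-weighted row
  sums and vanishing column sums off \<open>jh\<close>, so it is zero, and so is \<open>d\<close>.\<close>

lemma invertible_B1mat:
  fixes E :: "('i::finite \<times> 'j::finite) set"
  assumes tree: "bip_tree E" and mu_pos: "\<And>i j. (i, j) \<in> E \<Longrightarrow> mu i j > 0"
  shows "invertible (B1mat E mu jh)"
  unfolding invertible_left_inverse matrix_left_invertible_ker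
proof (intro allI impI)
  fix d :: "real^'i" assume d: "B1mat E mu jh *v d = 0"
  define b :: "real^'j" where "b = axis jh (\<Sum>i\<in>UNIV. d $ i)"
  have sums: "(\<Sum>i\<in>UNIV. d $ i) = (\<Sum>j\<in>UNIV. b $ j)"
    by (simp add: b_def sum_axis)
  define x where "x = Psi E d b"
  have x: "has_margins E d b x" unfolding x_def by (rule Psi_has_margins[OF tree sums])
  have rows: "(\<Sum>j\<in>UNIV. mu i j * x i j) = 0" for i
  proof -
    have "(\<Sum>j\<in>UNIV. mu i j * x i j) = (\<Sum>j\<in>{j. (i, j) \<in> E}. mu i j * x i j)"
      using x by (simp add: has_margins_def in_RG_sum_row)
    also have "\<dots> = (B1mat E mu jh *v d + tree_B2 E mu jh *v b) $ i"
      by (rule weighted_row_sum_B[OF tree x])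
    also have "\<dots> = 0"
      using d tree_B2_column_jh[OF tree] by (simp add: b_def matrix_vector_mult_axis)
    finally show ?thesis .
  qed
  have "x i j = 0" for i j
  proof (rule acyclic_array_eq_0[where jh = jh])
    show "bip_acyclic E" using tree by (simp add: bip_tree_def)
    show "in_RG E x" using x by (simp add: has_margins_def)
    show "mu i j \<noteq> 0" if "(i, j) \<in> E" for i j using mu_pos[OF that] by simp
    show "(\<Sum>j\<in>UNIV. mu i j * x i j) = 0" for i by (rule rows)
    show "(\<Sum>i\<in>UNIV. x i j) = 0" if "j \<noteq> jh" for j using x that by (simp add: has_margins_def b_def axis_def)
  qed
  then show "d = 0" using x by (simp add: has_margins_def vec_eq_iff)
qed

section \<open>The optimal value of the SWSS program\<close>

lemma invertible_matrix_inv: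
  "invertible A \<Longrightarrow> A ** matrix_inv A = mat 1 \<and> matrix_inv A ** A = mat 1"
  unfolding invertible_def matrix_inv_def by (rule someI_ex)

definition dual_weights :: "('i::finite \<times> 'j::finite) set \<Rightarrow> ('i \<Rightarrow> 'j \<Rightarrow> real) \<Rightarrow> 'j \<Rightarrow> real^'i" where
  "dual_weights E mu jh = (\<chi> i. 1) v* matrix_inv (B1mat E mu jh)"

lemma inner_ones_matrix_inv_B1mat:
  "(\<chi> i. 1) \<bullet> (matrix_inv (B1mat E mu jh) *v v) = dual_weights E mu jh \<bullet> v"
  by (simp add: dual_weights_def dot_lmul_matrix)

context
  fixes E :: "('i::finite \<times> 'j::finite) set" and mu :: "'i \<Rightarrow> 'j \<Rightarrow> real" and jh :: 'j
  assumes tree: "bip_tree E" and mu_pos: "\<And>i j. (i, j) \<in> E \<Longrightarrow> mu i j > 0"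
begin

lemma B1mat_matrix_inv:
  "B1mat E mu jh ** matrix_inv (B1mat E mu jh) = mat 1" "matrix_inv (B1mat E mu jh) ** B1mat E mu jh = mat 1"
  using invertible_matrix_inv[OF invertible_B1mat[of E mu jh, OF tree mu_pos]] by simp_all

lemma dual_weights_B1mat: "dual_weights E mu jh \<bullet> (B1mat E mu jh *v d) = (\<Sum>i\<in>UNIV. d $ i)"
proof -
  have "dual_weights E mu jh \<bullet> (B1mat E mu jh *v d) = (\<chi> i. 1) \<bullet> d"
    by (simp add: dual_weights_def dot_lmul_matrix matrix_vector_mul_assoc B1mat_matrix_inv)
  then show ?thesis by (simp add: inner_vec_def)
qed

lemma dual_weights_row_sums:
  assumes x: "has_margins E a b x"
  shows "(\<Sum>i\<in>UNIV. dual_weights E mu jh $ i * (\<Sum>j\<in>{j. (i, j) \<in> E}. mu i j * x i j))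
    = (\<Sum>i\<in>UNIV. a $ i) + (dual_weights E mu jh v* tree_B2 E mu jh) \<bullet> b"
proof -
  have "(\<chi> i. \<Sum>j\<in>{j. (i, j) \<in> E}. mu i j * x i j) = B1mat E mu jh *v a + tree_B2 E mu jh *v b"
    using weighted_row_sum_B[OF tree x] by (simp add: vec_eq_iff)
  then have "dual_weights E mu jh \<bullet> (\<chi> i. \<Sum>j\<in>{j. (i, j) \<in> E}. mu i j * x i j)
      = (\<Sum>i\<in>UNIV. a $ i) + (dual_weights E mu jh v* tree_B2 E mu jh) \<bullet> b"
    by (simp add: inner_add_right dual_weights_B1mat dot_lmul_matrix)
  then show ?thesis by (simp add: inner_vec_def)
qed

lemma dual_weights_edge:
  assumes "(i, j) \<in> E"
  shows "mu i j * dual_weights E mu jh $ i = 1 + (dual_weights E mu jh v* tree_B2 E mu jh) $ j"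
proof -
  have "(\<Sum>j'\<in>{j'. (i', j') \<in> E}. mu i' j' * unit_array i j i' j') = (if i' = i then mu i j else 0)"
    for i'
  proof -
    have "(\<Sum>j'\<in>{j'. (i', j') \<in> E}. mu i' j' * unit_array i j i' j')
        = (\<Sum>j'\<in>UNIV. mu i' j' * unit_array i j i' j')"
      using has_margins_unit_array[OF assms] by (simp add: has_margins_def in_RG_sum_row)
    also have "\<dots> = mu i' j * unit_array i j i' j"
      by (rule sum_UNIV_single) (simp add: unit_array_def)
    finally show ?thesis by (simp add: unit_array_def)
  qed
  then have "(\<Sum>i'\<in>UNIV. dual_weights E mu jh $ i' * (\<Sum>j'\<in>{j'. (i', j') \<in> E}. mu i' j' * unit_array i j i' j'))
      = mu i j * dual_weights E mu jh $ i"
    by (subst sum_UNIV_single[where a = i]) auto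
  then show ?thesis
    using dual_weights_row_sums[OF has_margins_unit_array[OF assms]] by (simp add: sum_axis inner_axis)
qed

text \<open>Along an edge, \<open>\<mu>\<^sub>i\<^sub>j y\<^sub>i = 1 + g\<^sub>j\<close> with \<open>g = y B\<^sub>2\<close> and \<open>g\<^sub>j\<^sub>h = 0\<close>; positivity of \<open>y\<^sub>i\<close> and of
  \<open>1 + g\<^sub>j\<close> therefore spreads from \<open>jh\<close> through the connected graph.\<close>

lemma dual_weights_pos: "dual_weights E mu jh $ i > 0"
proof -
  let ?y = "dual_weights E mu jh" and ?g = "dual_weights E mu jh v* tree_B2 E mu jh"
  define P where "P u = (case u of Inl i \<Rightarrow> ?y $ i > 0 | Inr j \<Rightarrow> 1 + ?g $ j > 0)" for u
  have "P (Inr jh)"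
    using tree_B2_column_jh[OF tree] by (simp add: P_def vector_matrix_mult_def)
  then have "P u" for u
  proof (rule bip_connected_induct[rotated])
    show "bip_connected E" using tree by (simp add: bip_tree_def)
    fix v w assume "badj E v w" "P v"
    then consider i j where "(i, j) \<in> E" "v = Inl i" "w = Inr j" | i j where "(i, j) \<in> E" "v = Inr j" "w = Inl i"
      by (cases v; cases w) (auto simp: badj_def)
    then show "P w"
    proof cases
      case (1 i j)
      then have "0 < mu i j * dual_weights E mu jh $ i"
        using \<open>P v\<close> mu_pos[OF 1(1)] by (simp add: P_def)
      then show ?thesis using 1 dual_weights_edge[OF 1(1)] by (simp add: P_def)
    next
      case (2 i j)
      then have "0 < mu i j * dual_weights E mu jh $ i"
        using \<open>P v\<close> dual_weights_edge[OF 2(1)] by (simp add: P_def)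
      then show ?thesis using 2 mu_pos[OF 2(1)] by (simp add: P_def zero_less_mult_iff)
    qed
  qed
  from this[of "Inl i"] show ?thesis by (simp add: P_def)
qed

lemma dual_weights_value:
  assumes k: "in_RG E k" and cols: "\<And>j. (\<Sum>i\<in>{i. (i, j) \<in> E}. k i j) = th j"
  shows "(\<Sum>i\<in>UNIV. dual_weights E mu jh $ i * (\<Sum>j\<in>{j. (i, j) \<in> E}. mu i j * k i j))
    = (\<Sum>j\<in>UNIV. th j) + (dual_weights E mu jh v* tree_B2 E mu jh) \<bullet> (\<chi> j. th j)"
proof -
  have margins: "has_margins E (\<chi> i. \<Sum>j\<in>UNIV. k i j) (\<chi> j. th j) k"
    using k cols by (simp add: has_margins_def in_RG_sum_col)
  show ?thesis
    using dual_weights_row_sums[OF margins] has_margins_sum_eq[OF margins] by simp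
qed

lemma swss_feasible_le:
  assumes k0: "in_RG E k0" "\<And>j. (\<Sum>i\<in>{i. (i, j) \<in> E}. k0 i j) = th j"
      "\<And>i. (\<Sum>j\<in>{j. (i, j) \<in> E}. mu i j * k0 i j) = lh i - hh i"
    and feasible: "swss_feasible E lh mu th p w"
  shows "w * (\<Sum>i\<in>UNIV. dual_weights E mu jh $ i * p i) \<le> - (\<Sum>i\<in>UNIV. dual_weights E mu jh $ i * hh i)"
proof -
  let ?y = "dual_weights E mu jh"
  from feasible obtain k where k: "in_RG E k" "\<And>j. (\<Sum>i\<in>{i. (i, j) \<in> E}. k i j) = th j"
    and rows: "\<And>i. lh i \<le> (\<Sum>j\<in>{j. (i, j) \<in> E}. mu i j * k i j) - w * p i"
    unfolding swss_feasible_def by blast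
  have "(\<Sum>i\<in>UNIV. ?y $ i * (lh i + w * p i)) \<le> (\<Sum>i\<in>UNIV. ?y $ i * (\<Sum>j\<in>{j. (i, j) \<in> E}. mu i j * k i j))"
    using rows dual_weights_pos
    by (intro sum_mono mult_left_mono) (auto simp: algebra_simps less_imp_le)
  also have "\<dots> = (\<Sum>i\<in>UNIV. ?y $ i * (\<Sum>j\<in>{j. (i, j) \<in> E}. mu i j * k0 i j))"
    using dual_weights_value[OF k] dual_weights_value[OF k0(1,2)] by simp
  also have "\<dots> = (\<Sum>i\<in>UNIV. ?y $ i * (lh i - hh i))" by (simp add: k0(3))
  finally show ?thesis
    by (simp add: algebra_simps sum.distrib sum_subtractf sum_distrib_left)
qed

text \<open>The value \<open>V\<close> is attained by correcting \<open>\<kappa>\<^sup>0\<close> with a flow whose row margins \<open>d\<close> solve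
  \<open>B\<^sub>1 d = h + V p\<close>; such a flow exists because \<open>\<Sum>\<^sub>i d\<^sub>i = y \<bullet> (h + V p) = 0\<close>.\<close>

lemma swss_feasible_dual_value:
  assumes k0: "in_RG E k0" "\<And>j. (\<Sum>i\<in>{i. (i, j) \<in> E}. k0 i j) = th j"
      "\<And>i. (\<Sum>j\<in>{j. (i, j) \<in> E}. mu i j * k0 i j) = lh i - hh i"
    and p_pos: "\<And>i. p i > 0"
  shows "swss_feasible E lh mu th p
    (- (\<Sum>i\<in>UNIV. dual_weights E mu jh $ i * hh i) / (\<Sum>i\<in>UNIV. dual_weights E mu jh $ i * p i))"
    (is "swss_feasible _ _ _ _ _ ?V")
proof -
  let ?y = "dual_weights E mu jh" and ?B1 = "B1mat E mu jh"
  have yp: "(\<Sum>i\<in>UNIV. ?y $ i * p i) > 0"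
    using dual_weights_pos p_pos by (intro sum_pos) auto
  define d where "d = matrix_inv ?B1 *v (\<chi> i. hh i + ?V * p i)"
  have Bd: "?B1 *v d = (\<chi> i. hh i + ?V * p i)"
    by (simp add: d_def matrix_vector_mul_assoc B1mat_matrix_inv)
  have "(\<Sum>i\<in>UNIV. d $ i) = ?y \<bullet> (\<chi> i. hh i + ?V * p i)"
    using dual_weights_B1mat[of d] by (simp add: Bd)
  also have "\<dots> = (\<Sum>i\<in>UNIV. ?y $ i * hh i) + ?V * (\<Sum>i\<in>UNIV. ?y $ i * p i)"
    unfolding inner_vec_def
    by (simp only: vec_lambda_beta inner_real_def distrib_left sum.distrib sum_distrib_left mult.left_commute)
  also have "\<dots> = 0" using yp by simp
  finally have "(\<Sum>i\<in>UNIV. d $ i) = (\<Sum>j\<in>UNIV. (0::real^'j) $ j)" by simp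
  from Psi_has_margins[OF tree this] have dl: "has_margins E d 0 (Psi E d 0)" .
  show ?thesis
    unfolding swss_feasible_def
  proof (intro exI[of _ "\<lambda>i j. k0 i j + Psi E d 0 i j"] conjI allI)
    show "in_RG E (\<lambda>i j. k0 i j + Psi E d 0 i j)"
      using k0(1) dl by (simp add: in_RG_def has_margins_def)
    show "(\<Sum>i\<in>{i. (i, j) \<in> E}. k0 i j + Psi E d 0 i j) = th j" for j
      using k0(2) dl by (simp add: sum.distrib in_RG_sum_col has_margins_def)
    have "(\<Sum>j\<in>{j. (i, j) \<in> E}. mu i j * Psi E d 0 i j) = hh i + ?V * p i" for i
      using weighted_row_sum_B[OF tree dl, where mu = mu and jh = jh and i = i] Bd
      by (simp add: vec_eq_iff)
    then show "lh i \<le> (\<Sum>j\<in>{j. (i, j) \<in> E}. mu i j * (k0 i j + Psi E d 0 i j)) - ?V * p i" for i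
      using k0(3) by (simp add: distrib_left sum.distrib)
  qed
qed

lemma swss_opt_value_dual_weights:
  assumes k0: "in_RG E k0" "\<And>j. (\<Sum>i\<in>{i. (i, j) \<in> E}. k0 i j) = th j"
      "\<And>i. (\<Sum>j\<in>{j. (i, j) \<in> E}. mu i j * k0 i j) = lh i - hh i"
    and p_pos: "\<And>i. p i > 0"
  shows "swss_opt_value E lh mu th p
    (- ((\<chi> i. 1) \<bullet> (matrix_inv (B1mat E mu jh) *v (\<chi> i. hh i)))
      / ((\<chi> i. 1) \<bullet> (matrix_inv (B1mat E mu jh) *v (\<chi> i. p i))))"
proof -
  let ?y = "dual_weights E mu jh"
  have yp: "(\<Sum>i\<in>UNIV. ?y $ i * p i) > 0"
    using dual_weights_pos p_pos by (intro sum_pos) auto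
  have "w \<le> - (\<Sum>i\<in>UNIV. ?y $ i * hh i) / (\<Sum>i\<in>UNIV. ?y $ i * p i)"
    if "swss_feasible E lh mu th p w" for w
    using swss_feasible_le[OF k0 that] by (subst pos_le_divide_eq[OF yp])
  moreover have "swss_feasible E lh mu th p (- (\<Sum>i\<in>UNIV. ?y $ i * hh i) / (\<Sum>i\<in>UNIV. ?y $ i * p i))"
    using swss_feasible_dual_value[OF k0] p_pos by blast
  moreover have "(\<chi> i. 1) \<bullet> (matrix_inv (B1mat E mu jh) *v (\<chi> i. f i)) = (\<Sum>i\<in>UNIV. ?y $ i * f i)" for f
    by (simp only: inner_ones_matrix_inv_B1mat) (simp add: inner_vec_def)
  ultimately show ?thesis by (simp add: swss_opt_value_def)
qed

end

lemma swss_opt_value_of_allocation: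
  fixes E :: "('i::finite \<times> 'j::finite) set"
  assumes tree: "bip_tree E" and mu_pos: "\<And>i j. (i, j) \<in> E \<Longrightarrow> mu i j > 0"
    and xs: "in_RG E xs" and xs_cols: "\<And>j. (\<Sum>i\<in>{i. (i, j) \<in> E}. xs i j) = 1"
    and hh: "\<And>i. lh i - hh i = (\<Sum>j\<in>{j. (i, j) \<in> E}. mu i j * xs i j * nuh j + muh i j * (xs i j * nu j))"
    and p_pos: "\<And>i. p i > 0"
  shows "swss_opt_value E lh mu (\<lambda>j. nuh j + (\<Sum>i\<in>{i. (i, j) \<in> E}. muh i j / mu i j * (xs i j * nu j))) p
    (- ((\<chi> i. 1) \<bullet> (matrix_inv (B1mat E mu jh) *v (\<chi> i. hh i)))
      / ((\<chi> i. 1) \<bullet> (matrix_inv (B1mat E mu jh) *v (\<chi> i. p i))))"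
proof (rule swss_opt_value_dual_weights[OF tree mu_pos _ _ _ p_pos])
  define k0 where "k0 i j = (if (i, j) \<in> E then xs i j * nuh j + muh i j / mu i j * (xs i j * nu j) else 0)"
    for i j
  show "in_RG E k0" by (simp add: in_RG_def k0_def)
  show "(\<Sum>i\<in>{i. (i, j) \<in> E}. k0 i j) = nuh j + (\<Sum>i\<in>{i. (i, j) \<in> E}. muh i j / mu i j * (xs i j * nu j))"
    for j
    using xs_cols[of j] by (simp add: k0_def sum.distrib sum_distrib_right[symmetric])
  show "(\<Sum>j\<in>{j. (i, j) \<in> E}. mu i j * k0 i j) = lh i - hh i" for i
    unfolding hh using mu_pos by (intro sum.cong) (auto simp: k0_def field_simps less_imp_neq[symmetric])
qed

text \<open>In the \<open>n\<close>-th system the row defect of the allocation-based \<open>\<kappa>\<close> is the drift \<open>h\<^sup>n\<close>;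
  this uses \<open>\<lambda>\<^sub>i = \<Sum>\<^sub>j \<mu>\<^sub>i\<^sub>j \<nu>\<^sub>j \<xi>\<^sup>*\<^sub>i\<^sub>j\<close>.\<close>

lemma scaled_row_defect_eq:
  fixes n :: nat and J :: "'j set"
  assumes "n \<ge> 1" and lam: "(\<Sum>j\<in>J. mu j * nu j * x j) = lam"
  shows "(lamn - real n * lam) / sqrt (real n) - (lamn - (\<Sum>j\<in>J. mun j * x j * real (N j))) / sqrt (real n)
    = (\<Sum>j\<in>J. mun j * x j * (sqrt (real n) * (real (N j) / real n - nu j))
        + sqrt (real n) * (mun j - mu j) * (x j * nu j))"
proof -
  define s where "s = sqrt (real n)"
  have s: "s > 0" "real n = s * s" using assms(1) by (simp_all add: s_def)
  have "mun j * x j * (s * (real (N j) / real n - nu j)) + s * (mun j - mu j) * (x j * nu j)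
      = mun j * x j * real (N j) / s - s * (mu j * nu j * x j)" for j
    using s by (simp add: field_simps)
  then have "(\<Sum>j\<in>J. mun j * x j * (s * (real (N j) / real n - nu j)) + s * (mun j - mu j) * (x j * nu j))
      = (\<Sum>j\<in>J. mun j * x j * real (N j)) / s - s * lam"
    unfolding lam[symmetric] by (simp add: sum_subtractf sum_divide_distrib sum_distrib_left)
  also have "\<dots> = (lamn - real n * lam) / s - (lamn - (\<Sum>j\<in>J. mun j * x j * real (N j))) / s"
    using s by (simp add: field_simps)
  finally show ?thesis by (simp add: s_def)
qed

theorem theorem4:
  fixes E :: "('i::finite \<times> 'j::finite) set"
    and lamn :: "nat \<Rightarrow> 'i \<Rightarrow> real" and mun :: "nat \<Rightarrow> 'i \<Rightarrow> 'j \<Rightarrow> real"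
    and Nn :: "nat \<Rightarrow> 'j \<Rightarrow> nat"
    and lam :: "'i \<Rightarrow> real" and mu :: "'i \<Rightarrow> 'j \<Rightarrow> real" and nu :: "'j \<Rightarrow> real"
    and lamh :: "'i \<Rightarrow> real" and muh :: "'i \<Rightarrow> 'j \<Rightarrow> real" and nuh :: "'j \<Rightarrow> real"
    and xs :: "'i \<Rightarrow> 'j \<Rightarrow> real"
    and ih :: 'i and jh :: 'j
  assumes tree: "bip_tree E"
    and lamn_pos: "\<And>n i. lamn n i > 0"
    and mun_pos: "\<And>n i j. (i, j) \<in> E \<Longrightarrow> mun n i j > 0"
    and lam_lim: "\<And>i. (\<lambda>n. lamn n i / real n) \<longlonglongrightarrow> lam i"
    and lam_pos: "\<And>i. lam i > 0"
    and N_lim: "\<And>j. (\<lambda>n. real (Nn n j) / real n) \<longlonglongrightarrow> nu j"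
    and nu_pos: "\<And>j. nu j > 0"
    and mu_lim: "\<And>i j. (i, j) \<in> E \<Longrightarrow> (\<lambda>n. mun n i j) \<longlonglongrightarrow> mu i j"
    and mu_pos: "\<And>i j. (i, j) \<in> E \<Longrightarrow> mu i j > 0"
    and lamh_lim: "\<And>i. (\<lambda>n. (lamn n i - real n * lam i) / sqrt (real n)) \<longlonglongrightarrow> lamh i"
    and muh_lim: "\<And>i j. (i, j) \<in> E \<Longrightarrow>
                   (\<lambda>n. sqrt (real n) * (mun n i j - mu i j)) \<longlonglongrightarrow> muh i j"
    and nuh_lim: "\<And>j. (\<lambda>n. sqrt (real n) * (real (Nn n j) / real n - nu j)) \<longlonglongrightarrow> nuh j"
    and crp: "crp_unique_solution E mu nu lam xs"
    and xs_colsum: "\<And>j. (\<Sum>i\<in>UNIV. xs i j) = 1"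
    and xs_pos: "\<And>i j. (i, j) \<in> E \<Longrightarrow> xs i j > 0"
    and edge: "(ih, jh) \<in> E"
  shows
   "let z = (\<lambda>i j. xs i j * nu j);
        theta = (\<lambda>j. nuh j + (\<Sum>i\<in>{i. (i, j) \<in> E}. (muh i j / mu i j) * z i j));
        lamhn = (\<lambda>n i. (lamn n i - real n * lam i) / sqrt (real n));
        muhn = (\<lambda>n i j. sqrt (real n) * (mun n i j - mu i j));
        nuhn = (\<lambda>n j. sqrt (real n) * (real (Nn n j) / real n - nu j));
        thetan = (\<lambda>n j. nuhn n j
                   + (\<Sum>i\<in>{i. (i, j) \<in> E}. (muhn n i j / mun n i j) * z i j));
        h = (\<lambda>i. lamh i - (\<Sum>j\<in>{j. (i, j) \<in> E}. mu i j * xs i j * nuh j + muh i j * z i j));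
        hn = (\<lambda>n i. (lamn n i - (\<Sum>j\<in>{j. (i, j) \<in> E}. mun n i j * xs i j * real (Nn n j)))
                     / sqrt (real n));
        B1 = B1mat E mu jh;
        Bn1 = (\<lambda>n. B1mat E (mun n) jh);
        e = ((\<chi> i. 1) :: real^'i)
    in invertible B1 \<and> (\<forall>n\<ge>1. invertible (Bn1 n)) \<and>
       (\<forall>p :: 'i \<Rightarrow> real. (\<forall>i. p i > 0) \<and> (\<Sum>i\<in>UNIV. p i) = 1 \<longrightarrow>
          swss_opt_value E lamh mu theta p
            (- (e \<bullet> (matrix_inv B1 *v (\<chi> i. h i))) / (e \<bullet> (matrix_inv B1 *v (\<chi> i. p i))))
          \<and> (\<forall>n\<ge>1. swss_opt_value E (lamhn n) (mun n) (thetan n) p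
            (- (e \<bullet> (matrix_inv (Bn1 n) *v (\<chi> i. hn n i)))
               / (e \<bullet> (matrix_inv (Bn1 n) *v (\<chi> i. p i))))))"
proof -
  have xs: "in_RG E xs" and lam: "\<And>i. (\<Sum>j\<in>{j. (i, j) \<in> E}. mu i j * nu j * xs i j) = lam i"
    using crp by (auto simp: crp_unique_solution_def crp_optimal_def crp_feasible_def)
  have xs_cols: "(\<Sum>i\<in>{i. (i, j) \<in> E}. xs i j) = 1" for j
    using xs_colsum[of j] in_RG_sum_col[OF xs] by simp
  show ?thesis
    unfolding Let_def
  proof (intro conjI allI impI, goal_cases)
    case 1
    show ?case by (rule invertible_B1mat[of E mu jh, OF tree mu_pos])
  next
    case (2 n)
    show ?case by (rule invertible_B1mat[of E "mun n" jh, OF tree mun_pos])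
  next
    case (3 p)
    then show ?case
      by (intro swss_opt_value_of_allocation[of E mu, OF tree mu_pos xs xs_cols]) auto
  next
    case (4 p n)
    then have "n \<ge> 1" "\<And>i. p i > 0" by auto
    then show ?case
      by (intro swss_opt_value_of_allocation[of E "mun n", OF tree mun_pos xs xs_cols])
        (simp_all add: scaled_row_defect_eq[OF \<open>n \<ge> 1\<close> lam])
  qed
qed

end
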